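(* Let $A=(V_\exists,V_\forall,E,E_f)$ be a fair game arena, $v\in V$, $s\in\Sigma$ and $t\in\Pi$. If $\mathsf{fair}_\forall(\mathsf{play}_v(s,t))$ holds, then there exists a $\forall$-fair strategy $\overline t\in\Pi^f$ with $\mathsf{play}_v(s,t)=\mathsf{play}_v(s,\overline t)$. Similarly, if $\mathsf{fair}_\exists(\mathsf{play}_v(s,t))$ holds, then there exists an $\exists$-fair strategy $\overline s\in\Sigma^f$ with $\mathsf{play}_v(s,t)=\mathsf{play}_v(\overline s,t)$.
   Context: A fair game arena $A=(V_\exists,V_\forall,E,E_f)$: finite node set $V=V_\exists\cup V_\forall$ (disjoint), right-total moves $E\subseteq V\times V$, fair moves $E_f\subseteq E$. A play is an infinite sequence $\tau=v_0v_1\ldots$ with $(v_j,v_{j+1})\in E$; $\tau_m=(v_0,v_1)(v_1,v_2)\ldots$; $\mathsf{Inf}$ denotes the set of elements occurring infinitely often. For $i\in\{\exists,\forall\}$, $\tau$ is $i$-fair ($\mathsf{fair}_i(\tau)$) if for all $u\in V_i\cap\mathsf{Inf}(\tau)$, every $(u,u')\in E_f$ is in $\mathsf{Inf}(\tau_m)$. A strategy for player $i$ is a function $p:V^*\cdot V_i\to V$ with $p(w\cdot u)\in E(u)$; it admits a play $v_0v_1\ldots$ if $p(v_0\ldots v_j)=v_{j+1}$ whenever $v_j\in V_i$. $\Sigma$ ($\Pi$) is the set of strategies of $\exists$ ($\forall$); $\mathsf{play}_v(s,t)$ is the unique play from $v$ admitted by both $s$ and $t$. A strategy is $i$-fair if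 every play it admits is $i$-fair; $\Sigma^f$ and $\Pi^f$ denote the sets of $\exists$-fair and $\forall$-fair strategies. *)

theory Defs
  imports Main
begin

definition arena :: "'v set \<Rightarrow> 'v set \<Rightarrow> ('v \<times> 'v) set \<Rightarrow> ('v \<times> 'v) set \<Rightarrow> bool" where
  "arena VE VA E Ef \<longleftrightarrow> finite (VE \<union> VA) \<and> VE \<inter> VA = {} \<and>
     E \<subseteq> (VE \<union> VA) \<times> (VE \<union> VA) \<and> (\<forall>u \<in> VE \<union> VA. \<exists>u'. (u, u') \<in> E) \<and> Ef \<subseteq> E"

definition is_play :: "('v \<times> 'v) set \<Rightarrow> (nat \<Rightarrow> 'v) \<Rightarrow> bool" where
  "is_play E \<tau> \<longleftrightarrow> (\<forall>j. (\<tau> j, \<tau> (Suc j)) \<in> E)"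

definition Inf_nodes :: "(nat \<Rightarrow> 'v) \<Rightarrow> 'v set" where
  "Inf_nodes \<tau> = {u. \<exists>\<^sub>\<infinity>j. \<tau> j = u}"

definition Inf_moves :: "(nat \<Rightarrow> 'v) \<Rightarrow> ('v \<times> 'v) set" where
  "Inf_moves \<tau> = {e. \<exists>\<^sub>\<infinity>j. (\<tau> j, \<tau> (Suc j)) = e}"

definition fair :: "'v set \<Rightarrow> ('v \<times> 'v) set \<Rightarrow> (nat \<Rightarrow> 'v) \<Rightarrow> bool" where
  "fair Vi Ef \<tau> \<longleftrightarrow> (\<forall>u \<in> Vi \<inter> Inf_nodes \<tau>. \<forall>u'. (u, u') \<in> Ef \<longrightarrow> (u, u') \<in> Inf_moves \<tau>)"

text \<open>Strategies of the player owning Vi: functions on histories w\<cdot>u (nonempty lists of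
  nodes, last element u \<in> Vi) choosing a successor of u. Values on other lists are irrelevant.\<close>
definition strategy :: "'v set \<Rightarrow> 'v set \<Rightarrow> ('v \<times> 'v) set \<Rightarrow> ('v list \<Rightarrow> 'v) \<Rightarrow> bool" where
  "strategy V Vi E p \<longleftrightarrow> (\<forall>w u. set w \<subseteq> V \<longrightarrow> u \<in> Vi \<longrightarrow> (u, p (w @ [u])) \<in> E)"

definition prefix :: "(nat \<Rightarrow> 'v) \<Rightarrow> nat \<Rightarrow> 'v list" where
  "prefix \<tau> n = map \<tau> [0..<n]"

definition admits :: "'v set \<Rightarrow> ('v list \<Rightarrow> 'v) \<Rightarrow> (nat \<Rightarrow> 'v) \<Rightarrow> bool" where
  "admits Vi p \<tau> \<longleftrightarrow> (\<forall>j. \<tau> j \<in> Vi \<longrightarrow> p (prefix \<tau> (Suc j)) = \<tau> (Suc j))"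

definition fair_strategy :: "'v set \<Rightarrow> ('v \<times> 'v) set \<Rightarrow> ('v \<times> 'v) set \<Rightarrow> ('v list \<Rightarrow> 'v) \<Rightarrow> bool" where
  "fair_strategy Vi E Ef p \<longleftrightarrow> (\<forall>\<tau>. is_play E \<tau> \<and> admits Vi p \<tau> \<longrightarrow> fair Vi Ef \<tau>)"

fun play_pref :: "'v set \<Rightarrow> ('v list \<Rightarrow> 'v) \<Rightarrow> ('v list \<Rightarrow> 'v) \<Rightarrow> 'v \<Rightarrow> nat \<Rightarrow> 'v list" where
  "play_pref VE s t v 0 = [v]"
| "play_pref VE s t v (Suc n) =
     (let w = play_pref VE s t v n in w @ [if last w \<in> VE then s w else t w])"

definition play :: "'v set \<Rightarrow> 'v \<Rightarrow> ('v list \<Rightarrow> 'v) \<Rightarrow> ('v list \<Rightarrow> 'v) \<Rightarrow> nat \<Rightarrow> 'v" where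
  "play VE v s t n = last (play_pref VE s t v n)"

end

theory Submission
  imports Defs "HOL-Library.Infinite_Set"
begin

text \<open>The fair strategy follows the given play as long as the history is a prefix of it, and
  after a deviation plays round robin: on its n-th visit to a node u it moves to the
  (n mod d)-th of the d successors of u. The given play is therefore still admitted and fair by
  assumption, and every play that deviates from it is eventually played round robin, so every
  successor of a node visited infinitely often is taken infinitely often.\<close>

definition successor_list :: "('v \<times> 'v) set \<Rightarrow> 'v \<Rightarrow> 'v list" where
  "successor_list E u = (SOME l. set l = {u'. (u, u') \<in> E})"

definition round_robin :: "('v \<times> 'v) set \<Rightarrow> 'v list \<Rightarrow> 'v" where
  "round_robin E h =
     successor_list E (last h) !
       (count_list (butlast h) (last h) mod length (successor_list E (last h)))"

definition follow_or_round_robin :: "('v \<times> 'v) set \<Rightarrow> (nat \<Rightarrow> 'v) \<Rightarrow> 'v list \<Rightarrow> 'v" where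
  "follow_or_round_robin E \<pi> h =
     (if h = prefix \<pi> (length h) then \<pi> (length h) else round_robin E h)"

lemma length_prefix [simp]: "length (prefix \<tau> n) = n"
  by (simp add: prefix_def)

lemma prefix_Suc: "prefix \<tau> (Suc n) = prefix \<tau> n @ [\<tau> n]"
  by (simp add: prefix_def)

lemma nth_prefix: "k < n \<Longrightarrow> prefix \<tau> n ! k = \<tau> k"
  by (simp add: prefix_def)

lemma prefix_cong: "(\<And>k. k < n \<Longrightarrow> \<tau> k = \<sigma> k) \<Longrightarrow> prefix \<tau> n = prefix \<sigma> n"
  by (simp add: prefix_def)

lemma count_list_prefix_Suc:
  "count_list (prefix \<tau> (Suc n)) u = count_list (prefix \<tau> n) u + (if \<tau> n = u then 1 else 0)"
  by (simp add: prefix_Suc)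

lemma count_list_prefix_mono: "m \<le> n \<Longrightarrow> count_list (prefix \<tau> m) u \<le> count_list (prefix \<tau> n) u"
  by (induction n rule: dec_induct) (auto simp: count_list_prefix_Suc)

lemma count_list_prefix_unbounded:
  assumes "\<exists>\<^sub>\<infinity>j. \<tau> j = u"
  shows "\<exists>M \<ge> N. c < count_list (prefix \<tau> M) u"
proof (induction c)
  case 0
  obtain j where "j \<ge> N" "\<tau> j = u"
    using assms by (auto simp: INFM_nat_le)
  then show ?case
    by (intro exI[of _ "Suc j"]) (simp add: count_list_prefix_Suc)
next
  case (Suc c)
  then obtain M where "M \<ge> N" "c < count_list (prefix \<tau> M) u" by blast
  moreover obtain j where "j \<ge> M" "\<tau> j = u"
    using assms by (auto simp: INFM_nat_le)
  ultimately show ?case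
    using count_list_prefix_mono[of M j \<tau> u]
    by (intro exI[of _ "Suc j"]) (simp add: count_list_prefix_Suc)
qed

lemma nat_seq_crosses_value:
  fixes f :: "nat \<Rightarrow> nat"
  assumes step: "\<And>j. f (Suc j) \<le> Suc (f j)"
    and "N \<le> M" and "f N \<le> c" and "c < f M"
  shows "\<exists>j \<ge> N. f j = c \<and> f (Suc j) = Suc c"
  using assms(2-4)
proof (induction M rule: dec_induct)
  case base
  then show ?case by simp
next
  case (step M)
  show ?case
  proof (cases "c < f M")
    case True
    then show ?thesis using step.IH step.prems(1) by blast
  next
    case False
    then show ?thesis
      using step.hyps(1) step.prems(2) assms(1)[of M] by (intro exI[of _ M]) simp
  qed
qed

lemma set_successor_list:
  assumes "finite E"
  shows "set (successor_list E u) = {u'. (u, u') \<in> E}"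
proof -
  have "{u'. (u, u') \<in> E} \<subseteq> snd ` E" by force
  then have "finite {u'. (u, u') \<in> E}"
    using assms by (meson finite_imageI finite_subset)
  then show ?thesis
    unfolding successor_list_def by (rule someI_ex[OF finite_list])
qed

lemma round_robin_in_E:
  assumes "finite E" and "(u, u') \<in> E"
  shows "(u, round_robin E (w @ [u])) \<in> E"
proof -
  let ?l = "successor_list E u"
  have "?l \<noteq> []"
    using assms set_successor_list[of E u] by auto
  then have "?l ! (count_list w u mod length ?l) \<in> set ?l"
    by simp
  then show ?thesis
    using set_successor_list[OF assms(1)] by (simp add: round_robin_def)
qed

lemma fair_if_eventually_round_robin:
  assumes fin: "finite E" and "Ef \<subseteq> E"
    and rr: "\<And>j. k \<le> j \<Longrightarrow> \<tau> j \<in> Vi \<Longrightarrow> \<tau> (Suc j) = round_robin E (prefix \<tau> (Suc j))"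
  shows "fair Vi Ef \<tau>"
  unfolding fair_def
proof (intro ballI allI impI)
  fix u u' assume u: "u \<in> Vi \<inter> Inf_nodes \<tau>" and "(u, u') \<in> Ef"
  define l where "l = successor_list E u"
  define f where "f j = count_list (prefix \<tau> j) u" for j
  have "u' \<in> set l"
    using \<open>(u, u') \<in> Ef\<close> \<open>Ef \<subseteq> E\<close> set_successor_list[OF fin] by (auto simp: l_def)
  then obtain i where i: "i < length l" "l ! i = u'"
    by (meson in_set_conv_nth)
  have visit: "\<tau> j = u" if "f (Suc j) = Suc (f j)" for j
    using that count_list_prefix_Suc[of \<tau> j u] by (auto simp: f_def split: if_splits)
  have "\<exists>j \<ge> m. (\<tau> j, \<tau> (Suc j)) = (u, u')" for m
  proof -
    define N where "N = max m k"
    \<comment> \<open>a visit count reached after position N and congruent to i modulo the out-degree of u\<close>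
    define c where "c = f N * length l + i"
    have "f N \<le> f N * length l"
      using i by simp
    then have "f N \<le> c"
      unfolding c_def by linarith
    moreover obtain M where "N \<le> M" "c < f M"
      using count_list_prefix_unbounded[of \<tau> u N c] u by (auto simp: Inf_nodes_def f_def)
    moreover have "f (Suc j) \<le> Suc (f j)" for j
      by (simp add: f_def count_list_prefix_Suc)
    ultimately obtain j where j: "j \<ge> N" "f j = c" "f (Suc j) = Suc c"
      using nat_seq_crosses_value by metis
    have "\<tau> j = u"
      using visit j by simp
    have "\<tau> (Suc j) = round_robin E (prefix \<tau> j @ [u])"
      using rr[of j] j(1) \<open>\<tau> j = u\<close> u by (simp add: N_def prefix_Suc)
    also have "\<dots> = l ! (c mod length l)"
      using j(2) by (simp add: round_robin_def l_def f_def)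
    also have "\<dots> = u'"
      using i by (simp add: c_def)
    moreover have "m \<le> j"
      using j(1) by (simp add: N_def)
    ultimately show ?thesis
      using \<open>\<tau> j = u\<close> by blast
  qed
  then show "(u, u') \<in> Inf_moves \<tau>"
    by (simp add: Inf_moves_def INFM_nat_le)
qed

lemma strategy_follow_or_round_robin:
  assumes "finite E" and total: "\<forall>u \<in> V. \<exists>u'. (u, u') \<in> E" and "Vi \<subseteq> V"
    and "is_play E \<pi>"
  shows "strategy V Vi E (follow_or_round_robin E \<pi>)"
  unfolding strategy_def
proof (intro allI impI)
  fix w u assume "set w \<subseteq> V" "u \<in> Vi"
  show "(u, follow_or_round_robin E \<pi> (w @ [u])) \<in> E"
  proof (cases "w @ [u] = prefix \<pi> (length (w @ [u]))")
    case True
    then have "u = \<pi> (length w)"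
      by (simp add: prefix_Suc)
    then show ?thesis
      using True \<open>is_play E \<pi>\<close> by (simp add: follow_or_round_robin_def is_play_def)
  next
    case False
    obtain u' where "(u, u') \<in> E"
      using total \<open>u \<in> Vi\<close> \<open>Vi \<subseteq> V\<close> by blast
    then show ?thesis
      using False round_robin_in_E[OF \<open>finite E\<close>] by (simp add: follow_or_round_robin_def)
  qed
qed

lemma admits_follow_or_round_robin: "admits Vi (follow_or_round_robin E \<pi>) \<pi>"
  by (simp add: admits_def follow_or_round_robin_def)

lemma fair_strategy_follow_or_round_robin:
  assumes "finite E" and "Ef \<subseteq> E" and "fair Vi Ef \<pi>"
  shows "fair_strategy Vi E Ef (follow_or_round_robin E \<pi>)"
  unfolding fair_strategy_def
proof (intro allI impI)
  fix \<tau> assume \<tau>: "is_play E \<tau> \<and> admits Vi (follow_or_round_robin E \<pi>) \<tau>"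
  show "fair Vi Ef \<tau>"
  proof (cases "\<tau> = \<pi>")
    case True
    then show ?thesis using \<open>fair Vi Ef \<pi>\<close> by simp
  next
    case False
    then obtain k where k: "\<tau> k \<noteq> \<pi> k" by auto
    have "\<tau> (Suc j) = round_robin E (prefix \<tau> (Suc j))" if "k \<le> j" "\<tau> j \<in> Vi" for j
    proof -
      have "prefix \<tau> (Suc j) \<noteq> prefix \<pi> (Suc j)"
        using nth_prefix[of k "Suc j" \<tau>] nth_prefix[of k "Suc j" \<pi>] k \<open>k \<le> j\<close> by auto
      then show ?thesis
        using \<tau> \<open>\<tau> j \<in> Vi\<close> by (auto simp: admits_def follow_or_round_robin_def)
    qed
    then show ?thesis
      using fair_if_eventually_round_robin[OF \<open>finite E\<close> \<open>Ef \<subseteq> E\<close>] by blast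
  qed
qed

lemma play_pref_eq_prefix: "play_pref VE s t v n = prefix (play VE v s t) (Suc n)"
proof (induction n)
  case 0
  then show ?case by (simp add: prefix_def play_def)
next
  case (Suc n)
  then show ?case
    by (simp add: prefix_Suc[of _ "Suc n"] play_def Let_def)
qed

lemma play_0: "play VE v s t 0 = v"
  by (simp add: play_def)

lemma play_Suc:
  "play VE v s t (Suc n) =
     (if play VE v s t n \<in> VE then s (prefix (play VE v s t) (Suc n))
      else t (prefix (play VE v s t) (Suc n)))"
  by (simp add: play_def Let_def play_pref_eq_prefix[symmetric])

lemma play_unique:
  assumes "\<tau> 0 = v"
    and step: "\<And>n. \<tau> (Suc n) =
       (if \<tau> n \<in> VE then s (prefix \<tau> (Suc n)) else t (prefix \<tau> (Suc n)))"
  shows "\<tau> = play VE v s t"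
proof
  fix n
  show "\<tau> n = play VE v s t n"
  proof (induction n rule: less_induct)
    case (less n)
    show ?case
    proof (cases n)
      case 0
      then show ?thesis using \<open>\<tau> 0 = v\<close> by (simp add: play_0)
    next
      case (Suc m)
      have "prefix \<tau> (Suc m) = prefix (play VE v s t) (Suc m)"
        using less Suc by (intro prefix_cong) simp
      then show ?thesis
        using less[of m] Suc by (simp add: step play_Suc)
    qed
  qed
qed

lemma play_in_V_is_play:
  assumes "E \<subseteq> V \<times> V" and "V = VE \<union> VA" and "v \<in> V"
    and s: "strategy V VE E s" and t: "strategy V VA E t"
  shows "\<And>n. play VE v s t n \<in> V" and "is_play E (play VE v s t)"
proof -
  let ?p = "play VE v s t"
  have move: "(?p n, ?p (Suc n)) \<in> E" if "\<forall>k \<le> n. ?p k \<in> V" for n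
  proof -
    have "set (prefix ?p n) \<subseteq> V"
      using that by (auto simp: prefix_def)
    then show ?thesis
      using that s t \<open>V = VE \<union> VA\<close>
      by (subst play_Suc) (auto simp: strategy_def prefix_Suc)
  qed
  have in_V: "\<forall>k \<le> n. ?p k \<in> V" for n
  proof (induction n)
    case 0
    then show ?case using \<open>v \<in> V\<close> by (simp add: play_0)
  next
    case (Suc n)
    then have "?p (Suc n) \<in> V"
      using move \<open>E \<subseteq> V \<times> V\<close> by blast
    then show ?case using Suc le_Suc_eq by auto
  qed
  then show "\<And>n. ?p n \<in> V" by blast
  show "is_play E ?p"
    using move in_V by (simp add: is_play_def)
qed

lemma play_eq_if_admits_VA:
  assumes "\<And>n. play VE v s t n \<in> VE \<union> VA" and "admits VA t' (play VE v s t)"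
  shows "play VE v s t = play VE v s t'"
proof (rule play_unique)
  fix n
  let ?p = "play VE v s t"
  show "?p (Suc n) = (if ?p n \<in> VE then s (prefix ?p (Suc n)) else t' (prefix ?p (Suc n)))"
  proof (cases "?p n \<in> VE")
    case False
    then have "?p n \<in> VA" using assms(1) by blast
    then show ?thesis
      using False assms(2) by (simp add: admits_def)
  qed (simp add: play_Suc[of VE v s t n])
qed (simp add: play_0)

lemma play_eq_if_admits_VE:
  assumes "admits VE s' (play VE v s t)"
  shows "play VE v s t = play VE v s' t"
proof (rule play_unique)
  fix n
  let ?p = "play VE v s t"
  show "?p (Suc n) = (if ?p n \<in> VE then s' (prefix ?p (Suc n)) else t (prefix ?p (Suc n)))"
  proof (cases "?p n \<in> VE")
    case True
    then show ?thesis
      using assms by (simp add: admits_def)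
  qed (simp add: play_Suc[of VE v s t n])
qed (simp add: play_0)

theorem lemma1:
  fixes VE VA :: "'v set" and E Ef :: "('v \<times> 'v) set"
    and v :: 'v and s t :: "'v list \<Rightarrow> 'v"
  assumes "arena VE VA E Ef"
    and "v \<in> VE \<union> VA"
    and "strategy (VE \<union> VA) VE E s"
    and "strategy (VE \<union> VA) VA E t"
  shows "(fair VA Ef (play VE v s t) \<longrightarrow>
           (\<exists>t'. strategy (VE \<union> VA) VA E t' \<and> fair_strategy VA E Ef t' \<and>
                 play VE v s t = play VE v s t'))
       \<and> (fair VE Ef (play VE v s t) \<longrightarrow>
           (\<exists>s'. strategy (VE \<union> VA) VE E s' \<and> fair_strategy VE E Ef s' \<and>
                 play VE v s t = play VE v s' t))"
proof -
  let ?V = "VE \<union> VA" and ?p = "play VE v s t"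
  have E: "E \<subseteq> ?V \<times> ?V" "\<forall>u \<in> ?V. \<exists>u'. (u, u') \<in> E" "Ef \<subseteq> E"
    using assms(1) by (auto simp: arena_def)
  have "finite E"
    using assms(1) E(1) finite_subset by (auto simp: arena_def)
  have in_V: "\<And>n. ?p n \<in> ?V" and "is_play E ?p"
    using play_in_V_is_play[OF E(1) refl assms(2-4)] by auto
  have strat: "strategy ?V Vi E (follow_or_round_robin E ?p)" if "Vi \<subseteq> ?V" for Vi
    using strategy_follow_or_round_robin[OF \<open>finite E\<close> E(2) that \<open>is_play E ?p\<close>] .
  have fair: "fair_strategy Vi E Ef (follow_or_round_robin E ?p)" if "fair Vi Ef ?p" for Vi
    using fair_strategy_follow_or_round_robin[OF \<open>finite E\<close> E(3) that] .
  have "?p = play VE v s (follow_or_round_robin E ?p)"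
    using play_eq_if_admits_VA[OF in_V admits_follow_or_round_robin] .
  moreover have "?p = play VE v (follow_or_round_robin E ?p) t"
    using play_eq_if_admits_VE[OF admits_follow_or_round_robin] .
  ultimately show ?thesis
    using strat fair by blast
qed

end
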